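(* Let $q$ be a prime power, $h\ge 2$, and $m>\max\{q^{h-1},hq-1\}$. Let $f(X)=\sum_{i=0}^{h-1}f_iX^{q^i}$ and $g(X)=\sum_{i=0}^{h-1}g_iX^{q^i}$ be invertible $\mathbb F_q$-linearised polynomials over $\mathbb F_{q^h}$. If $(f,g)$ satisfies property $(Prop_m)$, then $|\{i: f_i=0\}|=|\{i:g_i=0\}|\ge 1$.
   Context: An $\mathbb F_q$-linearised polynomial over $\mathbb F_{q^h}$ is $\sum_{l=0}^{h-1}a_lX^{q^l}$ with $a_l\in\mathbb F_{q^h}$, viewed as a map of $\mathbb F_{q^h}$; invertible means bijective. Identities $\equiv$ mean equality as maps. Property $(Prop_m)$: $(f,g)$ satisfies it if there exist triples $(a_j,b_j,c_j)\in(\mathbb F_{q^h}^* )^3$, $1\le j\le m$, with $(a_1,b_1,c_1)=(1,1,1)$, such that $a_jf(b_jf^{-1}(X))\equiv g(c_jg^{-1}(X))$ for every $j$, and for all $i\ne j$: $a_i\ne a_j$, $b_i\ne b_j$, $c_i\ne c_j$. *)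

theory Defs
  imports Main "HOL-Number_Theory.Prime_Powers"
begin

definition linpoly :: "nat \<Rightarrow> nat \<Rightarrow> (nat \<Rightarrow> 'a::field) \<Rightarrow> 'a \<Rightarrow> 'a" where
  "linpoly q h c x = (\<Sum>l<h. c l * x ^ (q ^ l))"

text \<open>Property (Prop_m), with the m triples indexed by j = 0..m-1
  (index 0 playing the role of j = 1 in the paper).\<close>
definition prop_m :: "nat \<Rightarrow> ('a::field \<Rightarrow> 'a) \<Rightarrow> ('a \<Rightarrow> 'a) \<Rightarrow> bool" where
  "prop_m m F G \<longleftrightarrow>
     (\<exists>a b c :: nat \<Rightarrow> 'a.
        (a 0, b 0, c 0) = (1, 1, 1) \<and>
        (\<forall>j<m. a j \<noteq> 0 \<and> b j \<noteq> 0 \<and> c j \<noteq> 0) \<and>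
        (\<forall>j<m. \<forall>x. a j * F (b j * inv F x) = G (c j * inv G x)) \<and>
        (\<forall>i<m. \<forall>j<m. i \<noteq> j \<longrightarrow> a i \<noteq> a j \<and> b i \<noteq> b j \<and> c i \<noteq> c j))"

end

theory Submission
  imports
    Defs
    "HOL-Number_Theory.Residues"
    "HOL-Combinatorics.Cycles"
    "Jordan_Normal_Form.Char_Poly"
begin

(* Write N for the linearised polynomial f^-1 o g. Property (Prop_m) says
   a_j f(b_j N(X)) = g(c_j X), and comparing the coefficients of X^(q^s) gives
   a_j Q_s(b_j) = g_s c_j^(q^s), where Q_s(X) = sum_k f_k N_(s-k)^(q^k) X^(q^k) has degree at most
   q^(h-1) (indices modulo h). If g_s = 0, then Q_s has more than q^(h-1) roots b_j, so Q_s = 0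
   and f_(s-t) = 0 for every t with N_t <> 0: g has at most as many zero coefficients as f, and by
   symmetry exactly as many. If there are none, raising the identity for s - 1 to the q-th power
   and comparing it with the one for s shows that a_j^(q-1) is a generalised eigenvalue of a pair of
   h x h matrices the first of which is invertible. So the a_j^(q-1) take at most h values, there
   are at most h(q-1) distinct a_j, and this contradicts m > hq - 1. *)

lemma power_card_eq_self:
  fixes x :: "'a::{finite,field}"
  shows "x ^ card (UNIV :: 'a set) = x"
proof (cases "x = 0")
  case False
  let ?U = "UNIV - {0 :: 'a}"
  have "(\<Prod>y\<in>?U. x * y) = (\<Prod>y\<in>?U. y)"
    by (rule prod.reindex_bij_witness[of _ "\<lambda>y. y / x" "\<lambda>y. x * y"]) (use False in auto)
  then have "x ^ card ?U = 1"
    by (simp add: prod.distrib)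
  moreover have "card (UNIV :: 'a set) = Suc (card ?U)"
    using finite_UNIV_card_ge_0[where ?'a = 'a] by (simp add: card_Diff_singleton)
  then have "x ^ card (UNIV :: 'a set) = x * x ^ card ?U"
    by (simp only: power_Suc)
  ultimately show ?thesis
    by simp
qed (simp add: finite_UNIV_card_ge_0)

lemma card_power_eq_le:
  fixes w :: "'a::idom"
  assumes "n > 0"
  shows "card {x. x ^ n = w} \<le> n"
proof -
  define p where "p = monom 1 n - [:w:]"
  have "coeff p n = 1"
    using assms by (simp add: p_def coeff_pCons split: nat.split)
  then have "card {x. poly p x = 0} \<le> degree p"
    by (intro card_poly_roots_bound) auto
  also have "degree p \<le> n"
    unfolding p_def by (intro degree_diff_le) (auto simp: degree_monom_le)
  finally show ?thesis
    by (simp add: p_def poly_monom)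
qed

lemma scaled_conj_eq_factor:
  assumes "inj F" "inj G" "\<And>y. F (N y) = G y"
    and "\<And>x. a * F (b * inv_into UNIV F x) = G (c * inv_into UNIV G x)"
  shows "a * F (b * N y) = G (c * y)"
proof -
  have "inv_into UNIV F (G y) = N y"
    using assms(1) by (simp flip: assms(3))
  then show ?thesis
    using assms(4)[of "G y"] assms(2) by simp
qed

lemma card_generalized_eigenvalues_le:
  fixes P R :: "'a::field mat"
  assumes P: "P \<in> carrier_mat n n" and R: "R \<in> carrier_mat n n" and det: "det P \<noteq> 0"
  shows "card {u. \<exists>v\<in>carrier_vec n. v \<noteq> 0\<^sub>v n \<and> P *\<^sub>v v = u \<cdot>\<^sub>v (R *\<^sub>v v)} \<le> n"
    (is "card ?E \<le> n")
proof -
  obtain P' where P': "P' \<in> carrier_mat n n" and P'P: "P' * P = 1\<^sub>m n"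
    using det_non_zero_imp_unit[OF P det, of "()"] unfolding Units_def ring_mat_def by auto
  define M where "M = P' * R"
  have M: "M \<in> carrier_mat n n"
    using P' R by (simp add: M_def)
  let ?roots = "{x. poly (char_poly M) x = 0}"
  have "u \<in> inverse ` ?roots"
    if v: "v \<in> carrier_vec n" "v \<noteq> 0\<^sub>v n" and eq: "P *\<^sub>v v = u \<cdot>\<^sub>v (R *\<^sub>v v)" for u v
  proof -
    have "P *\<^sub>v v \<noteq> 0\<^sub>v n"
      using v det det_0_iff_vec_prod_zero_field[OF P] by auto
    then have "u \<noteq> 0"
      using eq R v(1) by auto
    have "v = P' *\<^sub>v (P *\<^sub>v v)"
      using P P' P'P v(1) by (simp flip: assoc_mult_mat_vec)
    also have "\<dots> = u \<cdot>\<^sub>v (M *\<^sub>v v)"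
      using P' R v(1) eq by (simp add: M_def mult_mat_vec)
    finally have "inverse u \<cdot>\<^sub>v v = inverse u \<cdot>\<^sub>v (u \<cdot>\<^sub>v (M *\<^sub>v v))"
      by simp
    also have "\<dots> = M *\<^sub>v v"
      using \<open>u \<noteq> 0\<close> by (simp add: smult_smult_assoc)
    finally have "M *\<^sub>v v = inverse u \<cdot>\<^sub>v v"
      by simp
    then have "eigenvalue M (inverse u)"
      using M v unfolding eigenvalue_def eigenvector_def by auto
    then show ?thesis
      using \<open>u \<noteq> 0\<close> eigenvalue_root_char_poly[OF M] by (auto intro: image_eqI[of _ _ "inverse u"])
  qed
  moreover have "finite ?roots"
    using degree_monic_char_poly[OF M] by (intro poly_roots_finite) auto
  ultimately have "card ?E \<le> card (inverse ` ?roots)"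
    by (intro card_mono) auto
  also have "\<dots> \<le> card ?roots"
    using \<open>finite ?roots\<close> by (rule card_image_le)
  also have "\<dots> \<le> n"
    using card_poly_roots_bound[of "char_poly M"] degree_monic_char_poly[OF M] by fastforce
  finally show ?thesis .
qed

lemma prop_m_sym:
  fixes F G :: "'a::field \<Rightarrow> 'a"
  assumes "prop_m m F G"
  shows "prop_m m G F"
proof -
  obtain a b c :: "nat \<Rightarrow> 'a" where one: "(a 0, b 0, c 0) = (1, 1, 1)"
    and nz: "\<forall>j<m. a j \<noteq> 0 \<and> b j \<noteq> 0 \<and> c j \<noteq> 0"
    and conj: "\<forall>j<m. \<forall>x. a j * F (b j * inv_into UNIV F x) = G (c j * inv_into UNIV G x)"
    and dist: "\<forall>i<m. \<forall>j<m. i \<noteq> j \<longrightarrow> a i \<noteq> a j \<and> b i \<noteq> b j \<and> c i \<noteq> c j"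
    using assms unfolding prop_m_def by blast
  have "inverse (a j) * G (c j * inv_into UNIV G x) = F (b j * inv_into UNIV F x)" if "j < m" for j x
    using conj nz that by (simp add: field_simps)
  moreover have "inverse (a i) \<noteq> inverse (a j)" if "i < m" "j < m" "i \<noteq> j" for i j
    using dist that by simp
  ultimately show ?thesis
    unfolding prop_m_def using one nz dist
    by (intro exI[of _ "\<lambda>j. inverse (a j)"] exI[of _ c] exI[of _ b]) auto
qed

locale linearised_field =
  fixes q h :: nat and K :: "'a::{finite,field} itself"
  assumes q_primepow: "primepow q"
    and card_field: "card (UNIV :: 'a set) = q ^ h"
    and h_pos: "0 < h"
begin

abbreviation lin :: "(nat \<Rightarrow> 'a) \<Rightarrow> 'a \<Rightarrow> 'a" where
  "lin \<equiv> linpoly q h"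

lemma q_gt_1: "q > 1"
  using primepow_gt_Suc_0[OF q_primepow] by simp

lemma power_q_power_sum: "(\<Sum>k\<in>A. F k) ^ (q ^ i) = (\<Sum>k\<in>A. F k ^ (q ^ i))"
  for F :: "'b \<Rightarrow> 'a"
proof -
  obtain p k where p: "prime p" "q = p ^ k"
    using q_primepow unfolding primepow_def by blast
  have char_prime: "prime CHAR('a)"
    by (intro prime_CHAR_semidom finite_imp_CHAR_pos) simp
  moreover have "CHAR('a) dvd p ^ (k * h)"
    using CHAR_dvd_CARD[where ?'a = 'a] card_field p(2) by (simp add: power_mult)
  ultimately have "CHAR('a) = p"
    using p(1) prime_dvd_power primes_dvd_imp_eq by blast
  then show ?thesis
    using freshmans_dream_sum'[OF char_prime, of "q ^ i" "k * i"] p(2) by (simp add: power_mult)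
qed

lemma power_q_power_mod: "x ^ (q ^ i) = x ^ (q ^ (i mod h))"
  for x :: 'a
proof -
  have frobenius_h: "y ^ (q ^ h) = y" for y :: 'a
    using power_card_eq_self[of y] card_field by simp
  have periodic: "x ^ (q ^ (h * t)) = x" for t
    by (induction t) (simp_all only: mult_0_right power_0 power_one_right mult_Suc_right
        power_add power_mult frobenius_h)
  have "x ^ (q ^ i) = (x ^ (q ^ (h * (i div h)))) ^ (q ^ (i mod h))"
    by (simp flip: power_mult power_add)
  then show ?thesis
    by (simp only: periodic)
qed

(* Since x^(q^h) = x, coefficient indices live in Z/hZ; diff_mod s k is s - k there (for k <= h). *)
definition diff_mod :: "nat \<Rightarrow> nat \<Rightarrow> nat" where
  "diff_mod s k = (s + h - k) mod h"

lemma diff_mod_less: "diff_mod s k < h"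
  using h_pos by (simp add: diff_mod_def)

lemma diff_mod_add: "k \<le> h \<Longrightarrow> s < h \<Longrightarrow> (diff_mod s k + k) mod h = s"
  by (simp add: diff_mod_def mod_add_left_eq)

lemma diff_mod_add_mod:
  assumes "k \<le> h" "j < h"
  shows "diff_mod ((j + k) mod h) k = j"
proof -
  have "diff_mod ((j + k) mod h) k = ((j + k) mod h + (h - k)) mod h"
    using assms(1) by (simp add: diff_mod_def)
  also have "\<dots> = (j + k + (h - k)) mod h"
    by (rule mod_add_left_eq)
  also have "\<dots> = (j + h) mod h"
    using assms(1) by simp
  finally show ?thesis
    using assms(2) by simp
qed

lemma diff_mod_diff_mod: "k < h \<Longrightarrow> s < h \<Longrightarrow> diff_mod s (diff_mod s k) = k"
  by (metis diff_mod_add diff_mod_add_mod diff_mod_less add.commute less_imp_le)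

lemma sum_diff_mod_reindex:
  "k \<le> h \<Longrightarrow> (\<Sum>j<h. F j ((j + k) mod h)) = (\<Sum>s<h. F (diff_mod s k) s)"
  by (rule sum.reindex_bij_witness[of _ "\<lambda>s. diff_mod s k" "\<lambda>j. (j + k) mod h"])
     (auto simp: diff_mod_add diff_mod_add_mod diff_mod_less h_pos)

definition lin_comp :: "(nat \<Rightarrow> 'a) \<Rightarrow> (nat \<Rightarrow> 'a) \<Rightarrow> nat \<Rightarrow> 'a" where
  "lin_comp c d s = (\<Sum>k<h. c k * d (diff_mod s k) ^ (q ^ k))"

lemma power_q_power_lin:
  "lin d x ^ (q ^ k) = (\<Sum>j<h. d j ^ (q ^ k) * x ^ (q ^ ((j + k) mod h)))"
proof -
  have "lin d x ^ (q ^ k) = (\<Sum>j<h. d j ^ (q ^ k) * x ^ (q ^ (j + k)))"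
    by (simp add: linpoly_def power_q_power_sum power_mult_distrib power_add power_mult)
  also have "\<dots> = (\<Sum>j<h. d j ^ (q ^ k) * x ^ (q ^ ((j + k) mod h)))"
    by (intro sum.cong refl arg_cong2[where f = "(*)"] power_q_power_mod)
  finally show ?thesis .
qed

lemma lin_comp: "lin c (lin d x) = lin (lin_comp c d) x"
proof -
  have "lin c (lin d x) = (\<Sum>k<h. \<Sum>j<h. c k * d j ^ (q ^ k) * x ^ (q ^ ((j + k) mod h)))"
    unfolding linpoly_def[of q h c] by (simp only: power_q_power_lin sum_distrib_left mult.assoc)
  also have "\<dots> = (\<Sum>k<h. \<Sum>s<h. c k * d (diff_mod s k) ^ (q ^ k) * x ^ (q ^ s))"
    by (intro sum.cong refl sum_diff_mod_reindex) simp
  also have "\<dots> = lin (lin_comp c d) x"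
    by (subst sum.swap) (simp add: linpoly_def lin_comp_def sum_distrib_right)
  finally show ?thesis .
qed

lemma lin_coeff_eq_0_if_roots:
  assumes roots: "\<forall>x\<in>A. lin c x = 0" and card: "q ^ (h - 1) < card A" and i: "i < h"
  shows "c i = 0"
proof (rule ccontr)
  assume "c i \<noteq> 0"
  define p where "p = (\<Sum>k<h. monom (c k) (q ^ k))"
  have "coeff p (q ^ i) = c i"
    using i q_gt_1 by (simp add: p_def coeff_sum coeff_monom)
  have "A \<subseteq> {x. poly p x = 0}"
    using roots by (auto simp: p_def poly_sum poly_monom linpoly_def)
  then have "card A \<le> card {x. poly p x = 0}"
    by (intro card_mono) simp_all
  also have "\<dots> \<le> degree p"
    using \<open>coeff p (q ^ i) = c i\<close> \<open>c i \<noteq> 0\<close> by (intro card_poly_roots_bound) auto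
  also have "\<dots> \<le> q ^ (h - 1)"
    unfolding p_def using q_gt_1
    by (intro degree_sum_le) (auto intro: order.trans[OF degree_monom_le] power_increasing)
  finally show False
    using card by simp
qed

lemma lin_coeffs_unique:
  assumes "\<And>x. lin c x = lin d x" and "i < h"
  shows "c i = d i"
proof -
  have "\<forall>x\<in>UNIV. lin (\<lambda>k. c k - d k) x = 0"
    using assms(1) by (simp add: linpoly_def left_diff_distrib sum_subtractf)
  moreover have "q ^ (h - 1) < card (UNIV :: 'a set)"
    using card_field q_gt_1 h_pos by (simp add: power_strict_increasing)
  ultimately have "c i - d i = 0"
    using lin_coeff_eq_0_if_roots[of UNIV "\<lambda>k. c k - d k" i] assms(2) by simp
  then show ?thesis
    by simp
qed

lemma lin_mult_arg: "lin c (b * x) = lin (\<lambda>s. c s * b ^ (q ^ s)) x"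
  by (simp add: linpoly_def power_mult_distrib mult.assoc)

lemma mult_lin: "a * lin c x = lin (\<lambda>s. a * c s) x"
  by (simp add: linpoly_def sum_distrib_left mult.assoc)

lemma lin_funpow: "\<exists>r. lin c ^^ n = lin r"
proof (induction n)
  case 0
  have "lin (\<lambda>s. if s = 0 then 1 else 0) x = x" for x
    using h_pos by (simp add: linpoly_def if_distrib[of "\<lambda>a. a * _"] sum.delta cong: if_cong)
  then show ?case
    by (metis funpow_0 id_apply)
next
  case (Suc n)
  then obtain r where "lin c ^^ n = lin r"
    by blast
  then show ?case
    by (auto intro!: exI[of _ "lin_comp c r"] simp: lin_comp)
qed

lemma lin_inv:
  assumes "bij (lin c)"
  shows "\<exists>r. inv_into UNIV (lin c) = lin r"
proof -
  have "permutation (lin c)"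
    using assms by (simp add: permutation)
  then obtain n where n: "lin c ^^ n = id" "n > 0"
    by (rule permutation_is_nilpotent)
  then have "lin c ^^ Suc (n - 1) = id"
    by simp
  then have "lin c \<circ> lin c ^^ (n - 1) = id" "lin c ^^ (n - 1) \<circ> lin c = id"
    by (simp only: funpow.simps(2), simp only: funpow_Suc_right)
  then have "inv_into UNIV (lin c) = lin c ^^ (n - 1)"
    by (rule inv_unique_comp)
  then show ?thesis
    using lin_funpow by metis
qed

lemma lin_conj_exists:
  assumes "bij (lin f)" "bij (lin g)"
  obtains N where "bij (lin N)" "\<And>y. lin f (lin N y) = lin g y"
proof -
  obtain r where r: "inv_into UNIV (lin f) = lin r"
    using lin_inv[OF assms(1)] by blast
  have "bij (inv_into UNIV (lin f) \<circ> lin g)"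
    using assms by (simp add: bij_comp bij_imp_bij_inv)
  moreover have "inv_into UNIV (lin f) \<circ> lin g = lin (lin_comp r g)"
    by (simp add: r lin_comp fun_eq_iff)
  moreover have "lin f (lin (lin_comp r g) y) = lin g y" for y
  proof -
    have "lin f (lin (lin_comp r g) y) = lin f (inv_into UNIV (lin f) (lin g y))"
      by (simp add: r lin_comp)
    also have "\<dots> = lin g y"
      using assms(1) by (simp add: bij_is_surj surj_f_inv_f)
    finally show ?thesis .
  qed
  ultimately show ?thesis
    using that by simp
qed

(* lin (comp_coeff f N s) is the polynomial Q_s of the proof idea. *)
definition comp_coeff :: "(nat \<Rightarrow> 'a) \<Rightarrow> (nat \<Rightarrow> 'a) \<Rightarrow> nat \<Rightarrow> nat \<Rightarrow> 'a" where
  "comp_coeff f N s k = f k * N (diff_mod s k) ^ (q ^ k)"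

lemma lin_mult_lin: "lin f (b * lin N y) = lin (\<lambda>s. lin (comp_coeff f N s) b) y"
proof -
  have "lin_comp (\<lambda>s. f s * b ^ (q ^ s)) N = (\<lambda>s. lin (comp_coeff f N s) b)"
    unfolding lin_comp_def linpoly_def comp_coeff_def by (simp only: ac_simps)
  then show ?thesis
    by (simp only: lin_mult_arg lin_comp)
qed

lemma conj_coeff_eq:
  assumes "\<And>y. a * lin f (b * lin N y) = lin g (c * y)" and "s < h"
  shows "a * lin (comp_coeff f N s) b = g s * c ^ (q ^ s)"
proof -
  have "lin (\<lambda>s. a * lin (comp_coeff f N s) b) y = lin (\<lambda>s. g s * c ^ (q ^ s)) y" for y
  proof -
    have "a * lin f (b * lin N y) = lin (\<lambda>s. a * lin (comp_coeff f N s) b) y"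
      unfolding lin_mult_lin by (rule mult_lin)
    then have "lin (\<lambda>s. a * lin (comp_coeff f N s) b) y = lin g (c * y)"
      using assms(1) by simp
    also have "\<dots> = lin (\<lambda>s. g s * c ^ (q ^ s)) y"
      by (rule lin_mult_arg)
    finally show ?thesis .
  qed
  from lin_coeffs_unique[OF this assms(2)] show ?thesis .
qed

lemma card_zero_coeffs_le:
  assumes N: "bij (lin N)" and B: "q ^ (h - 1) < card B"
    and conj: "\<And>b. b \<in> B \<Longrightarrow> \<exists>a c. a \<noteq> 0 \<and> (\<forall>y. a * lin f (b * lin N y) = lin g (c * y))"
  shows "card {s. s < h \<and> g s = 0} \<le> card {k. k < h \<and> f k = 0}"
proof -
  have "\<exists>t<h. N t \<noteq> 0"
  proof (rule ccontr)
    assume "\<not> ?thesis"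
    then have "lin N x = 0" for x
      unfolding linpoly_def by (intro sum.neutral) auto
    then show False
      using inj_onD[OF bij_is_inj[OF N], of 0 1] by simp
  qed
  then obtain t where t: "t < h" "N t \<noteq> 0"
    by blast
  have zero: "f (diff_mod s t) = 0" if s: "s < h" "g s = 0" for s
  proof -
    have "lin (comp_coeff f N s) b = 0" if "b \<in> B" for b
    proof -
      obtain a c where "a \<noteq> 0" "\<And>y. a * lin f (b * lin N y) = lin g (c * y)"
        using conj[OF \<open>b \<in> B\<close>] by blast
      with conj_coeff_eq[of a f b N g c s] s show ?thesis
        by simp
    qed
    then have "comp_coeff f N s (diff_mod s t) = 0"
      using lin_coeff_eq_0_if_roots[OF _ B diff_mod_less] by blast
    then show ?thesis
      using t diff_mod_diff_mod[OF t(1) s(1)] by (simp add: comp_coeff_def)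
  qed
  show ?thesis
  proof (rule card_inj_on_le)
    show "inj_on (\<lambda>s. diff_mod s t) {s. s < h \<and> g s = 0}"
      by (rule inj_onI) (metis (mono_tags) diff_mod_add less_imp_le mem_Collect_eq t(1))
    show "(\<lambda>s. diff_mod s t) ` {s. s < h \<and> g s = 0} \<subseteq> {k. k < h \<and> f k = 0}"
      using zero diff_mod_less by auto
  qed simp
qed

lemma lin_power_q: "lin c x ^ q = lin (\<lambda>k. c (diff_mod k 1) ^ q) x"
proof -
  have "lin c x ^ q = (\<Sum>j<h. c j ^ q * x ^ (q ^ ((j + 1) mod h)))"
    using power_q_power_lin[of c x 1] by simp
  also have "\<dots> = lin (\<lambda>k. c (diff_mod k 1) ^ q) x"
    using sum_diff_mod_reindex[of 1 "\<lambda>j s. c j ^ q * x ^ (q ^ s)"] h_pos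
    by (simp add: linpoly_def)
  finally show ?thesis .
qed

lemma comp_coeff_shift:
  assumes conj: "\<And>y. a * lin f (b * lin N y) = lin g (c * y)"
    and "a \<noteq> 0" and t: "t < h" and g: "g (diff_mod t 1) \<noteq> 0"
  shows "lin (comp_coeff f N t) b
    = a ^ (q - 1) * (g t / g (diff_mod t 1) ^ q) * lin (comp_coeff f N (diff_mod t 1)) b ^ q"
proof -
  define s where "s = diff_mod t 1"
  have "c ^ (q ^ t) = c ^ (q ^ (Suc s mod h))"
    using diff_mod_add[of 1 t] t h_pos by (simp add: s_def)
  also have "\<dots> = c ^ (q ^ s * q)"
    by (simp only: power_Suc2 flip: power_q_power_mod)
  also have "\<dots> = (c ^ (q ^ s)) ^ q"
    by (rule power_mult)
  also have "c ^ (q ^ s) = a * lin (comp_coeff f N s) b / g s"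
    using conj_coeff_eq[OF conj diff_mod_less] g by (simp add: s_def field_simps)
  finally have "c ^ (q ^ t) = a ^ q * lin (comp_coeff f N s) b ^ q / g s ^ q"
    by (simp add: power_divide power_mult_distrib)
  moreover have "a ^ q = a * a ^ (q - 1)"
    using q_gt_1 by (cases q) simp_all
  ultimately have "a * lin (comp_coeff f N t) b
      = a * (a ^ (q - 1) * (g t / g s ^ q) * lin (comp_coeff f N s) b ^ q)"
    using conj_coeff_eq[OF conj t] by simp
  then show ?thesis
    using \<open>a \<noteq> 0\<close> unfolding s_def by (metis mult_left_cancel)
qed

definition frob_vec :: "'a \<Rightarrow> 'a vec" where
  "frob_vec b = vec h (\<lambda>k. b ^ (q ^ k))"

lemma mat_mult_frob_vec:
  "t < h \<Longrightarrow> (mat h h F *\<^sub>v frob_vec b) $ t = lin (\<lambda>k. F (t, k)) b"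
  by (simp add: frob_vec_def linpoly_def scalar_prod_def atLeast0LessThan)

definition comp_mat :: "(nat \<Rightarrow> 'a) \<Rightarrow> (nat \<Rightarrow> 'a) \<Rightarrow> 'a mat" where
  "comp_mat f N = mat h h (\<lambda>(s, k). comp_coeff f N s k)"

definition shift_mat :: "(nat \<Rightarrow> 'a) \<Rightarrow> (nat \<Rightarrow> 'a) \<Rightarrow> (nat \<Rightarrow> 'a) \<Rightarrow> 'a mat" where
  "shift_mat f N g = mat h h (\<lambda>(t, k).
     g t / g (diff_mod t 1) ^ q * comp_coeff f N (diff_mod t 1) (diff_mod k 1) ^ q)"

lemma comp_mat_frob_vec:
  assumes conj: "\<And>y. a * lin f (b * lin N y) = lin g (c * y)"
    and "a \<noteq> 0" and g: "\<And>s. s < h \<Longrightarrow> g s \<noteq> 0"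
  shows "comp_mat f N *\<^sub>v frob_vec b = a ^ (q - 1) \<cdot>\<^sub>v (shift_mat f N g *\<^sub>v frob_vec b)"
proof (rule eq_vecI)
  fix t
  assume "t < dim_vec (a ^ (q - 1) \<cdot>\<^sub>v (shift_mat f N g *\<^sub>v frob_vec b))"
  then have t: "t < h"
    by (simp add: shift_mat_def)
  have "(comp_mat f N *\<^sub>v frob_vec b) $ t = lin (comp_coeff f N t) b"
    unfolding comp_mat_def mat_mult_frob_vec[OF t] by simp
  also have "\<dots> = a ^ (q - 1) * (g t / g (diff_mod t 1) ^ q
      * lin (\<lambda>k. comp_coeff f N (diff_mod t 1) (diff_mod k 1) ^ q) b)"
    using comp_coeff_shift[OF conj \<open>a \<noteq> 0\<close> t g[OF diff_mod_less]] by (simp add: lin_power_q)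
  also have "\<dots> = a ^ (q - 1) * (shift_mat f N g *\<^sub>v frob_vec b) $ t"
    unfolding shift_mat_def mat_mult_frob_vec[OF t] by (simp add: mult_lin)
  finally show "(comp_mat f N *\<^sub>v frob_vec b) $ t
      = (a ^ (q - 1) \<cdot>\<^sub>v (shift_mat f N g *\<^sub>v frob_vec b)) $ t"
    using t by (simp add: shift_mat_def)
qed (simp add: comp_mat_def shift_mat_def)

lemma det_comp_mat_neq_0:
  assumes f: "\<And>k. k < h \<Longrightarrow> f k \<noteq> 0" and N: "surj (lin N)"
  shows "det (comp_mat f N) \<noteq> 0"
proof
  assume "det (comp_mat f N) = 0"
  then obtain x where x: "x \<in> carrier_vec h" "x \<noteq> 0\<^sub>v h" "comp_mat f N *\<^sub>v x = 0\<^sub>v h"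
    using det_0_iff_vec_prod_zero_field[of "comp_mat f N" h] by (auto simp: comp_mat_def)
  define c where "c k = f k * x $ k" for k
  have "lin_comp c N s = 0" if "s < h" for s
  proof -
    have "lin_comp c N s = (comp_mat f N *\<^sub>v x) $ s"
      using that x(1)
      by (simp add: comp_mat_def lin_comp_def comp_coeff_def c_def scalar_prod_def
          atLeast0LessThan ac_simps)
    then show ?thesis
      using that x(3) by simp
  qed
  then have "lin (lin_comp c N) y = 0" for y
    unfolding linpoly_def by (intro sum.neutral) simp
  have lin_c: "lin c z = 0" for z
  proof -
    obtain y where "z = lin N y"
      using N unfolding surj_def by blast
    then show ?thesis
      using \<open>lin (lin_comp c N) y = 0\<close> by (simp only: lin_comp)
  qed
  have lin_0: "lin (\<lambda>_. 0) z = 0" for z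
    by (simp add: linpoly_def)
  have "c k = (\<lambda>_. 0) k" if "k < h" for k
    by (rule lin_coeffs_unique) (simp_all only: lin_c lin_0 that)
  then have "x = 0\<^sub>v h"
    using x(1) f by (intro eq_vecI) (auto simp: c_def)
  with x(2) show False ..
qed

lemma card_conj_scalars_le:
  assumes f: "\<And>k. k < h \<Longrightarrow> f k \<noteq> 0" and g: "\<And>s. s < h \<Longrightarrow> g s \<noteq> 0"
    and N: "surj (lin N)"
    and conj: "\<And>a. a \<in> A \<Longrightarrow>
      a \<noteq> 0 \<and> (\<exists>b c. b \<noteq> 0 \<and> (\<forall>y. a * lin f (b * lin N y) = lin g (c * y)))"
  shows "card A \<le> h * (q - 1)"
proof -
  define U where
    "U = {u. \<exists>v\<in>carrier_vec h. v \<noteq> 0\<^sub>v h \<and> comp_mat f N *\<^sub>v v = u \<cdot>\<^sub>v (shift_mat f N g *\<^sub>v v)}"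
  have "card U \<le> h"
    unfolding U_def using det_comp_mat_neq_0[OF f N]
    by (intro card_generalized_eigenvalues_le) (auto simp: comp_mat_def shift_mat_def)
  have "a ^ (q - 1) \<in> U" if "a \<in> A" for a
  proof -
    obtain b c where "a \<noteq> 0" "b \<noteq> 0" "\<And>y. a * lin f (b * lin N y) = lin g (c * y)"
      using conj[OF \<open>a \<in> A\<close>] by blast
    then have "comp_mat f N *\<^sub>v frob_vec b = a ^ (q - 1) \<cdot>\<^sub>v (shift_mat f N g *\<^sub>v frob_vec b)"
      using g by (intro comp_mat_frob_vec)
    moreover have "frob_vec b \<in> carrier_vec h"
      by (simp add: frob_vec_def)
    moreover have "frob_vec b $ 0 \<noteq> 0"
      using \<open>b \<noteq> 0\<close> h_pos by (simp add: frob_vec_def)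
    then have "frob_vec b \<noteq> 0\<^sub>v h"
      using h_pos by auto
    ultimately show ?thesis
      unfolding U_def by blast
  qed
  then have "A \<subseteq> (\<Union>u\<in>U. {a. a ^ (q - 1) = u})"
    by blast
  then have "card A \<le> card (\<Union>u\<in>U. {a. a ^ (q - 1) = u})"
    by (intro card_mono) simp_all
  also have "\<dots> \<le> (\<Sum>u\<in>U. card {a. a ^ (q - 1) = u})"
    by (intro card_UN_le) simp
  also have "\<dots> \<le> (\<Sum>u\<in>U. q - 1)"
    using q_gt_1 by (intro sum_mono card_power_eq_le) simp
  also have "\<dots> \<le> h * (q - 1)"
    using \<open>card U \<le> h\<close> by simp
  finally show ?thesis .
qed

lemma prop_m_conj_lin:
  assumes "bij (lin f)" "bij (lin g)" "prop_m m (lin f) (lin g)"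
  obtains a b c N where "inj_on a {..<m}" "inj_on b {..<m}"
    "\<forall>j<m. a j \<noteq> 0 \<and> b j \<noteq> 0" "bij (lin N)" "\<And>j y. j < m \<Longrightarrow> a j * lin f (b j * lin N y) = lin g (c j * y)"
proof -
  obtain a b c :: "nat \<Rightarrow> 'a" where nz: "\<forall>j<m. a j \<noteq> 0 \<and> b j \<noteq> 0 \<and> c j \<noteq> 0"
    and conj: "\<forall>j<m. \<forall>x.
      a j * lin f (b j * inv_into UNIV (lin f) x) = lin g (c j * inv_into UNIV (lin g) x)"
    and dist: "\<forall>i<m. \<forall>j<m. i \<noteq> j \<longrightarrow> a i \<noteq> a j \<and> b i \<noteq> b j \<and> c i \<noteq> c j"
    using assms(3) unfolding prop_m_def by blast
  have inj: "inj_on a {..<m}" "inj_on b {..<m}"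
    using dist by (auto simp: inj_on_def)
  obtain N where N: "bij (lin N)" "\<And>y. lin f (lin N y) = lin g y"
    using lin_conj_exists assms(1,2) by blast
  have "a j * lin f (b j * lin N y) = lin g (c j * y)" if "j < m" for j y
    using scaled_conj_eq_factor[where F = "lin f" and G = "lin g", OF _ _ N(2)] conj that
      assms(1,2) bij_is_inj by blast
  moreover have "\<forall>j<m. a j \<noteq> 0 \<and> b j \<noteq> 0"
    using nz by blast
  ultimately show ?thesis
    using that[OF inj _ N(1)] by blast
qed

lemma card_zero_coeffs_le_prop_m:
  assumes "bij (lin f)" "bij (lin g)" "prop_m m (lin f) (lin g)" "q ^ (h - 1) < m"
  shows "card {s. s < h \<and> g s = 0} \<le> card {k. k < h \<and> f k = 0}"
proof -
  obtain a b c N where inj: "inj_on b {..<m}" and nz: "\<forall>j<m. a j \<noteq> 0"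
    and N: "bij (lin N)"
    and conj: "\<And>j y. j < m \<Longrightarrow> a j * lin f (b j * lin N y) = lin g (c j * y)"
    using prop_m_conj_lin[OF assms(1-3)] by metis
  have "q ^ (h - 1) < card (b ` {..<m})"
    using assms(4) card_image[OF inj] by simp
  moreover have "\<exists>a' c'. a' \<noteq> 0 \<and> (\<forall>y. a' * lin f (x * lin N y) = lin g (c' * y))"
    if "x \<in> b ` {..<m}" for x
    using that nz conj by blast
  ultimately show ?thesis
    by (rule card_zero_coeffs_le[OF N])
qed

lemma prop_m_le_if_no_zero_coeffs:
  assumes "bij (lin f)" "bij (lin g)" "prop_m m (lin f) (lin g)"
    and f: "\<And>k. k < h \<Longrightarrow> f k \<noteq> 0" and g: "\<And>s. s < h \<Longrightarrow> g s \<noteq> 0"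
  shows "m \<le> h * (q - 1)"
proof -
  obtain a b c N where inj: "inj_on a {..<m}" and nz: "\<forall>j<m. a j \<noteq> 0 \<and> b j \<noteq> 0"
    and N: "bij (lin N)"
    and conj: "\<And>j y. j < m \<Longrightarrow> a j * lin f (b j * lin N y) = lin g (c j * y)"
    using prop_m_conj_lin[OF assms(1-3)] by metis
  have "card (a ` {..<m}) \<le> h * (q - 1)"
  proof (rule card_conj_scalars_le[OF f g bij_is_surj[OF N]])
    fix x
    assume "x \<in> a ` {..<m}"
    then obtain j where "j < m" "x = a j"
      by blast
    then show "x \<noteq> 0 \<and>
      (\<exists>b' c'. b' \<noteq> 0 \<and> (\<forall>y. x * lin f (b' * lin N y) = lin g (c' * y)))"
      using nz conj[of j] by (intro conjI exI[of _ "b j"] exI[of _ "c j"]) auto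
  qed
  then show ?thesis
    using card_image[OF inj] by simp
qed

end

theorem lemma5p12:
  fixes q h m :: nat and f g :: "nat \<Rightarrow> 'a::{finite,field}"
  assumes "primepow q"
    and "card (UNIV :: 'a set) = q ^ h"
    and "h \<ge> 2"
    and "m > max (q ^ (h - 1)) (h * q - 1)"
    and "bij (linpoly q h f)"
    and "bij (linpoly q h g)"
    and "prop_m m (linpoly q h f) (linpoly q h g)"
  shows "card {i. i < h \<and> f i = 0} = card {i. i < h \<and> g i = 0}
         \<and> card {i. i < h \<and> f i = 0} \<ge> 1"
proof -
  interpret linearised_field q h "TYPE('a)"
    using assms(1-3) by unfold_locales simp_all
  have m_gt: "q ^ (h - 1) < m" "h * (q - 1) < m"
    using assms(3,4) by (auto simp: diff_mult_distrib2)
  have zeros_g_le: "card {s. s < h \<and> g s = 0} \<le> card {k. k < h \<and> f k = 0}"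
    by (rule card_zero_coeffs_le_prop_m[OF assms(5-7) m_gt(1)])
  have zeros_f_le: "card {s. s < h \<and> f s = 0} \<le> card {k. k < h \<and> g k = 0}"
    by (rule card_zero_coeffs_le_prop_m[OF assms(6,5) prop_m_sym[OF assms(7)] m_gt(1)])
  have "1 \<le> card {i. i < h \<and> f i = 0}"
  proof (rule ccontr)
    assume "\<not> ?thesis"
    then have "card {i. i < h \<and> f i = 0} = 0"
      by linarith
    moreover from this zeros_g_le have "card {i. i < h \<and> g i = 0} = 0"
      by linarith
    ultimately have "m \<le> h * (q - 1)"
      by (intro prop_m_le_if_no_zero_coeffs[OF assms(5-7)]) simp_all
    with m_gt(2) show False
      by simp
  qed
  then show ?thesis
    using le_antisym[OF zeros_f_le zeros_g_le] by simp
qed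

end
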